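(* Let $1/3<\kappa<\gamma<1/2$, assume hypothesis (H), let $I=[a,b]\subset[0,T]$, $\varepsilon=b-a$, $a_0\in\mathbb R^k$, $\tilde h\in\mathcal L_1(\mathbb R^k)$, and let $\tilde y\in\tilde{\mathcal Q}^\kappa_{\tilde h}(I;\mathbb R^k)$ with decomposition $\tilde\delta\tilde y=(\tilde x^1\zeta^{\tilde y})^*+\tilde r^{\tilde y}$. Set $y=a_0+\int_0^\infty\hat\phi(\xi)\tilde y(\xi)d\xi$. Then $y\in\mathcal A^\kappa_{f,h}(I;\mathbb R^k)$ with $$f_{ts}=\int_0^\infty\hat\phi(\xi)\,(e^{-\xi(t-s)}-1)e^{-\xi(s-a)}\tilde h(\xi)\,d\xi,\qquad h=a_0+\int_0^\infty\hat\phi(\xi)\tilde h(\xi)d\xi,$$ and $\mathcal M[y;\mathcal A^\kappa_{f,h}(I)]\le c_x\{\mathcal N[\tilde y;\tilde{\mathcal Q}^\kappa(I)]+\varepsilon^{1-\kappa}\mathcal N[\tilde h;\mathcal L_1]\}$.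
   Context: Measurable $\hat\phi:(0,\infty)\to\mathbb R$ and $T>0$ fixed. $\mathcal L_1(V)$: measurable $g:[0,\infty)\to V$ with $\mathcal N[g;\mathcal L_1]=\int_0^\infty|\hat\phi(\xi)|(1+\xi)\|g(\xi)\|d\xi<\infty$. $\tilde{\mathcal C}_k(I;V)$: continuous maps from $\{t_1\ge\dots\ge t_k\}\subset I^k$ to $\mathcal L_1(V)$. $(\tilde\delta f)_{ts}(\xi)=f_t(\xi)-e^{-\xi(t-s)}f_s(\xi)$, $(\tilde\delta B)_{tus}(\xi)=B_{ts}-B_{tu}-e^{-\xi(t-u)}B_{us}$. $\mathcal N[B;\tilde{\mathcal C}^\mu_2]=\sup_{s<t}\mathcal N[B_{ts};\mathcal L_1]/|t-s|^\mu$, $\mathcal N[f;\tilde{\mathcal C}^\mu_1]=\mathcal N[\tilde\delta f;\tilde{\mathcal C}^\mu_2]$; $\mathcal N[h;\tilde{\mathcal C}^\mu_3]=\inf\sum_i\sup_{s<u<t}\mathcal N[h^i_{tus};\mathcal L_1]|t-u|^{-\rho_i}|u-s|^{-(\mu-\rho_i)}$ over $h=\sum_ih^i$, $\rho_i\in(0,\mu)$. Paths: $\mathcal N[z;\mathcal C_1^0]=\sup\|z_s\|$, $\mathcal N[z;\mathcal C_1^\mu]=\sup_{s\ne t}\|z_t-z_s\|/|t-s|^\mu$, $\mathcal N[r;\mathcal C_2^\mu]=\sup_{s\ne t}\|r_{ts}\|/|t-s|^\mu$. Hypothesis (H): $\tilde x^1\in\tilde{\mathcal C}_2^\gamma([0,T];\mathbb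 R^{1,n})$, $\tilde x^2\in\tilde{\mathcal C}_2^{2\gamma}([0,T];\mathbb R^{n,n})$, $\tilde x^3\in\tilde{\mathcal C}_3^{3\gamma}([0,T];\mathbb R^{n,n})$, $\tilde\delta\tilde x^1=0$, $(\tilde\delta\tilde x^2)_{tus}=\tilde x^1_{tu}\otimes x^1_{us}+\tilde x^3_{tus}$ with $x^1_{ts}=\int_0^\infty\tilde x^1_{ts}(\xi)\hat\phi(\xi)d\xi$ and $(u\otimes v)_{ij}=u_iv_j$. $\tilde{\mathcal Q}^\kappa_{\tilde h}(I;\mathbb R^k)$: $\tilde y\in\tilde{\mathcal C}_1(I;\mathbb R^k)$ with $\tilde y_a=\tilde h$ and $(\tilde\delta\tilde y)_{ts}=(\tilde x^1_{ts}\zeta_s)^*+\tilde r_{ts}$, $\zeta\in\mathcal C_1^\kappa(I;\mathbb R^{n,k})$, $\tilde r\in\tilde{\mathcal C}^{2\kappa}_2$; $\mathcal N[\tilde y;\tilde{\mathcal Q}^\kappa]=\mathcal N[\tilde y;\tilde{\mathcal C}^\kappa_1]+\mathcal N[\zeta;\mathcal C_1^0]+\mathcal N[\zeta;\mathcal C_1^\kappa]+\mathcal N[\tilde r;\tilde{\mathcal C}^{2\kappa}_2]$. $\mathcal A^\kappa_{f,h}(I;\mathbb R^k)$ for $f$ with $\mathcal N[f;\mathcal C^1_2]<\infty$ and $h\in\mathbb R^k$: $\gamma$-Hölder paths $y$ with $y_a=h$ and $(\delta y)_{ts}-f_{ts}=(x^1_{ts}\zeta^y_s)^*+r^y_{ts}$,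 $\zeta^y\in\mathcal C_1^\kappa(I;\mathbb R^{n,k})$, $r^y\in\mathcal C_2^{2\kappa}(I;\mathbb R^k)$; $\mathcal M[y;\mathcal A^\kappa_{f,h}]=\mathcal N[\zeta^y;\mathcal C_1^0]+\mathcal N[\zeta^y;\mathcal C_1^\kappa]+\mathcal N[r^y;\mathcal C_2^{2\kappa}]+\mathcal N[y;\mathcal C_1^\kappa]$. *)

theory Defs
  imports "HOL-Analysis.Analysis"
begin

definition L1_nn :: "(real \<Rightarrow> real) \<Rightarrow> (real \<Rightarrow> 'v::real_normed_vector) \<Rightarrow> ennreal" where
  "L1_nn \<phi> g = (\<integral>\<^sup>+ \<xi>. indicator {0<..} \<xi> * ennreal (\<bar>\<phi> \<xi>\<bar> * (1 + \<xi>) * norm (g \<xi>)) \<partial>lborel)"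

definition isL1 :: "(real \<Rightarrow> real) \<Rightarrow> (real \<Rightarrow> 'v::real_normed_vector) \<Rightarrow> bool" where
  "isL1 \<phi> g \<longleftrightarrow> set_borel_measurable lborel {0..} g \<and> L1_nn \<phi> g < \<infinity>"

definition L1norm :: "(real \<Rightarrow> real) \<Rightarrow> (real \<Rightarrow> 'v::real_normed_vector) \<Rightarrow> real" where
  "L1norm \<phi> g = enn2real (L1_nn \<phi> g)"

definition phint :: "(real \<Rightarrow> real) \<Rightarrow> (real \<Rightarrow> 'v::{banach,second_countable_topology}) \<Rightarrow> 'v" where
  "phint \<phi> g = (LINT \<xi>:{0<..}|lborel. \<phi> \<xi> *\<^sub>R g \<xi>)"

definition simplex2 :: "real \<Rightarrow> real \<Rightarrow> (real \<times> real) set" where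
  "simplex2 a b = {(t,s). a \<le> s \<and> s \<le> t \<and> t \<le> b}"

definition simplex3 :: "real \<Rightarrow> real \<Rightarrow> (real \<times> real \<times> real) set" where
  "simplex3 a b = {(t,u,s). a \<le> s \<and> s \<le> u \<and> u \<le> t \<and> t \<le> b}"

definition L1_cont :: "(real \<Rightarrow> real) \<Rightarrow> 'a::metric_space set \<Rightarrow> ('a \<Rightarrow> real \<Rightarrow> 'v::real_normed_vector) \<Rightarrow> bool" where
  "L1_cont \<phi> S F \<longleftrightarrow> (\<forall>p\<in>S. isL1 \<phi> (F p)) \<and>
     (\<forall>p\<in>S. \<forall>e>0. \<exists>d>0. \<forall>q\<in>S. dist q p < d \<longrightarrow> L1norm \<phi> (\<lambda>\<xi>. F q \<xi> - F p \<xi>) < e)"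

definition tC1 :: "(real \<Rightarrow> real) \<Rightarrow> real \<Rightarrow> real \<Rightarrow> (real \<Rightarrow> real \<Rightarrow> 'v::real_normed_vector) \<Rightarrow> bool" where
  "tC1 \<phi> a b f \<longleftrightarrow> L1_cont \<phi> {a..b} f"

definition tC2 :: "(real \<Rightarrow> real) \<Rightarrow> real \<Rightarrow> real \<Rightarrow> (real \<Rightarrow> real \<Rightarrow> real \<Rightarrow> 'v::real_normed_vector) \<Rightarrow> bool" where
  "tC2 \<phi> a b B \<longleftrightarrow> L1_cont \<phi> (simplex2 a b) (\<lambda>(t,s). B t s)"

definition tC3 :: "(real \<Rightarrow> real) \<Rightarrow> real \<Rightarrow> real \<Rightarrow> (real \<Rightarrow> real \<Rightarrow> real \<Rightarrow> real \<Rightarrow> 'v::real_normed_vector) \<Rightarrow> bool" where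
  "tC3 \<phi> a b H \<longleftrightarrow> L1_cont \<phi> (simplex3 a b) (\<lambda>(t,u,s). H t u s)"

definition tdelta1 :: "(real \<Rightarrow> real \<Rightarrow> 'v::real_vector) \<Rightarrow> real \<Rightarrow> real \<Rightarrow> real \<Rightarrow> 'v" where
  "tdelta1 f t s = (\<lambda>\<xi>. f t \<xi> - exp (- \<xi> * (t - s)) *\<^sub>R f s \<xi>)"

definition tdelta2 :: "(real \<Rightarrow> real \<Rightarrow> real \<Rightarrow> 'v::real_vector) \<Rightarrow> real \<Rightarrow> real \<Rightarrow> real \<Rightarrow> real \<Rightarrow> 'v" where
  "tdelta2 B t u s = (\<lambda>\<xi>. B t s \<xi> - B t u \<xi> - exp (- \<xi> * (t - u)) *\<^sub>R B u s \<xi>)"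

definition offdiag2 :: "real \<Rightarrow> real \<Rightarrow> (real \<times> real) set" where
  "offdiag2 a b = {(t,s). a \<le> s \<and> s < t \<and> t \<le> b}"

definition tquot2 :: "(real \<Rightarrow> real) \<Rightarrow> real \<Rightarrow> (real \<Rightarrow> real \<Rightarrow> real \<Rightarrow> 'v::real_normed_vector) \<Rightarrow> real \<times> real \<Rightarrow> real" where
  "tquot2 \<phi> \<mu> B = (\<lambda>(t,s). L1norm \<phi> (B t s) / (t - s) powr \<mu>)"

definition tnorm2 :: "(real \<Rightarrow> real) \<Rightarrow> real \<Rightarrow> real \<Rightarrow> real \<Rightarrow> (real \<Rightarrow> real \<Rightarrow> real \<Rightarrow> 'v::real_normed_vector) \<Rightarrow> real" where
  "tnorm2 \<phi> \<mu> a b B = (SUP p \<in> offdiag2 a b. tquot2 \<phi> \<mu> B p)"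

definition tC2mu :: "(real \<Rightarrow> real) \<Rightarrow> real \<Rightarrow> real \<Rightarrow> real \<Rightarrow> (real \<Rightarrow> real \<Rightarrow> real \<Rightarrow> 'v::real_normed_vector) \<Rightarrow> bool" where
  "tC2mu \<phi> \<mu> a b B \<longleftrightarrow> tC2 \<phi> a b B \<and> bdd_above (tquot2 \<phi> \<mu> B ` offdiag2 a b)"

definition tnorm1 :: "(real \<Rightarrow> real) \<Rightarrow> real \<Rightarrow> real \<Rightarrow> real \<Rightarrow> (real \<Rightarrow> real \<Rightarrow> 'v::real_normed_vector) \<Rightarrow> real" where
  "tnorm1 \<phi> \<mu> a b f = tnorm2 \<phi> \<mu> a b (tdelta1 f)"

text \<open>H in C~^mu_3(I;V): continuous, and admitting a finite decomposition H = sum_i H^i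
  with rho_i in (0,mu) such that each weighted sup is finite (i.e. the infimum defining
  N[H; C~^mu_3] is finite).\<close>
definition tC3mu :: "(real \<Rightarrow> real) \<Rightarrow> real \<Rightarrow> real \<Rightarrow> real \<Rightarrow> (real \<Rightarrow> real \<Rightarrow> real \<Rightarrow> real \<Rightarrow> 'v::real_normed_vector) \<Rightarrow> bool" where
  "tC3mu \<phi> \<mu> a b H \<longleftrightarrow> tC3 \<phi> a b H \<and>
     (\<exists>(hs :: (real \<Rightarrow> real \<Rightarrow> real \<Rightarrow> real \<Rightarrow> 'v) list) (\<rho>s :: real list).
        length hs = length \<rho>s \<and>
        (\<forall>i < length hs. 0 < \<rho>s ! i \<and> \<rho>s ! i < \<mu> \<and>
            (\<forall>(t,u,s) \<in> simplex3 a b. isL1 \<phi> ((hs ! i) t u s)) \<and>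
            (\<exists>C. \<forall>t u s. a \<le> s \<and> s < u \<and> u < t \<and> t \<le> b \<longrightarrow>
                 L1norm \<phi> ((hs ! i) t u s) \<le> C * (t - u) powr (\<rho>s ! i) * (u - s) powr (\<mu> - \<rho>s ! i))) \<and>
        (\<forall>(t,u,s) \<in> simplex3 a b. \<forall>\<xi>\<ge>0. H t u s \<xi> = (\<Sum>i<length hs. (hs ! i) t u s \<xi>)))"

definition pnorm0 :: "real \<Rightarrow> real \<Rightarrow> (real \<Rightarrow> 'v::real_normed_vector) \<Rightarrow> real" where
  "pnorm0 a b z = (SUP s \<in> {a..b}. norm (z s))"

definition pquot1 :: "real \<Rightarrow> (real \<Rightarrow> 'v::real_normed_vector) \<Rightarrow> real \<times> real \<Rightarrow> real" where
  "pquot1 \<mu> z = (\<lambda>(t,s). norm (z t - z s) / \<bar>t - s\<bar> powr \<mu>)"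

definition pairs_ne :: "real \<Rightarrow> real \<Rightarrow> (real \<times> real) set" where
  "pairs_ne a b = {(t,s). t \<in> {a..b} \<and> s \<in> {a..b} \<and> s \<noteq> t}"

definition pholder :: "real \<Rightarrow> real \<Rightarrow> real \<Rightarrow> (real \<Rightarrow> 'v::real_normed_vector) \<Rightarrow> bool" where
  "pholder \<mu> a b z \<longleftrightarrow> bdd_above (pquot1 \<mu> z ` pairs_ne a b)"

definition pnorm1 :: "real \<Rightarrow> real \<Rightarrow> real \<Rightarrow> (real \<Rightarrow> 'v::real_normed_vector) \<Rightarrow> real" where
  "pnorm1 \<mu> a b z = (SUP p \<in> pairs_ne a b. pquot1 \<mu> z p)"

text \<open>Two-parameter paths r_ts, considered for s < t (they are only defined on the simplex).\<close>
definition pquot2 :: "real \<Rightarrow> (real \<Rightarrow> real \<Rightarrow> 'v::real_normed_vector) \<Rightarrow> real \<times> real \<Rightarrow> real" where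
  "pquot2 \<mu> r = (\<lambda>(t,s). norm (r t s) / \<bar>t - s\<bar> powr \<mu>)"

definition pC2 :: "real \<Rightarrow> real \<Rightarrow> real \<Rightarrow> (real \<Rightarrow> real \<Rightarrow> 'v::real_normed_vector) \<Rightarrow> bool" where
  "pC2 \<mu> a b r \<longleftrightarrow> bdd_above (pquot2 \<mu> r ` offdiag2 a b)"

definition pnorm2 :: "real \<Rightarrow> real \<Rightarrow> real \<Rightarrow> (real \<Rightarrow> real \<Rightarrow> 'v::real_normed_vector) \<Rightarrow> real" where
  "pnorm2 \<mu> a b r = (SUP p \<in> offdiag2 a b. pquot2 \<mu> r p)"

definition tensor :: "real ^ 'n \<Rightarrow> real ^ 'n \<Rightarrow> real ^ 'n ^ 'n" where
  "tensor u v = (\<chi> i j. u $ i * v $ j)"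

definition xint :: "(real \<Rightarrow> real) \<Rightarrow> (real \<Rightarrow> real \<Rightarrow> real \<Rightarrow> real ^ 'n) \<Rightarrow> real \<Rightarrow> real \<Rightarrow> real ^ 'n" where
  "xint \<phi> x1t t s = phint \<phi> (x1t t s)"

definition hypH :: "(real \<Rightarrow> real) \<Rightarrow> real \<Rightarrow> real \<Rightarrow> (real \<Rightarrow> real \<Rightarrow> real \<Rightarrow> real ^ 'n)
     \<Rightarrow> (real \<Rightarrow> real \<Rightarrow> real \<Rightarrow> real ^ 'n ^ 'n) \<Rightarrow> (real \<Rightarrow> real \<Rightarrow> real \<Rightarrow> real \<Rightarrow> real ^ 'n ^ 'n) \<Rightarrow> bool" where
  "hypH \<phi> \<gamma> T x1t x2t x3t \<longleftrightarrow>
     tC2mu \<phi> \<gamma> 0 T x1t \<and> tC2mu \<phi> (2 * \<gamma>) 0 T x2t \<and> tC3mu \<phi> (3 * \<gamma>) 0 T x3t \<and>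
     (\<forall>(t,u,s) \<in> simplex3 0 T. \<forall>\<xi>\<ge>0. tdelta2 x1t t u s \<xi> = 0) \<and>
     (\<forall>(t,u,s) \<in> simplex3 0 T. \<forall>\<xi>\<ge>0.
        tdelta2 x2t t u s \<xi> = tensor (x1t t u \<xi>) (xint \<phi> x1t u s) + x3t t u s \<xi>)"

text \<open>y~ in Q~^kappa_{h~}(I;R^k) with decomposition (zeta, r~).  Row vector times matrix,
  then transposed, is rendered as  x v* zeta.\<close>
definition tQ :: "(real \<Rightarrow> real) \<Rightarrow> real \<Rightarrow> (real \<Rightarrow> real \<Rightarrow> real \<Rightarrow> real ^ 'n) \<Rightarrow> real \<Rightarrow> real
     \<Rightarrow> (real \<Rightarrow> real ^ 'k) \<Rightarrow> (real \<Rightarrow> real \<Rightarrow> real ^ 'k) \<Rightarrow> (real \<Rightarrow> real ^ 'k ^ 'n)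
     \<Rightarrow> (real \<Rightarrow> real \<Rightarrow> real \<Rightarrow> real ^ 'k) \<Rightarrow> bool" where
  "tQ \<phi> \<kappa> x1t a b h yt \<zeta> rt \<longleftrightarrow>
     tC1 \<phi> a b yt \<and> (\<forall>\<xi>\<ge>0. yt a \<xi> = h \<xi>) \<and>
     (\<forall>(t,s) \<in> simplex2 a b. \<forall>\<xi>\<ge>0. tdelta1 yt t s \<xi> = x1t t s \<xi> v* \<zeta> s + rt t s \<xi>) \<and>
     pholder \<kappa> a b \<zeta> \<and> tC2mu \<phi> (2 * \<kappa>) a b rt"

definition tQnorm :: "(real \<Rightarrow> real) \<Rightarrow> real \<Rightarrow> real \<Rightarrow> real
     \<Rightarrow> (real \<Rightarrow> real \<Rightarrow> real ^ 'k) \<Rightarrow> (real \<Rightarrow> real ^ 'k ^ 'n)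
     \<Rightarrow> (real \<Rightarrow> real \<Rightarrow> real \<Rightarrow> real ^ 'k) \<Rightarrow> real" where
  "tQnorm \<phi> \<kappa> a b yt \<zeta> rt =
     tnorm1 \<phi> \<kappa> a b yt + pnorm0 a b \<zeta> + pnorm1 \<kappa> a b \<zeta> + tnorm2 \<phi> (2 * \<kappa>) a b rt"

text \<open>y in A^kappa_{f,h}(I;R^k) with decomposition (zeta^y, r^y); includes the standing
  requirement N[f; C^1_2] < infinity.\<close>
definition inA :: "real \<Rightarrow> real \<Rightarrow> (real \<Rightarrow> real \<Rightarrow> real ^ 'n) \<Rightarrow> real \<Rightarrow> real
     \<Rightarrow> (real \<Rightarrow> real \<Rightarrow> real ^ 'k) \<Rightarrow> real ^ 'k \<Rightarrow> (real \<Rightarrow> real ^ 'k)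
     \<Rightarrow> (real \<Rightarrow> real ^ 'k ^ 'n) \<Rightarrow> (real \<Rightarrow> real \<Rightarrow> real ^ 'k) \<Rightarrow> bool" where
  "inA \<kappa> \<gamma> x1 a b f h y \<zeta>y ry \<longleftrightarrow>
     pC2 1 a b f \<and> pholder \<gamma> a b y \<and> y a = h \<and>
     (\<forall>(t,s) \<in> simplex2 a b. y t - y s - f t s = x1 t s v* \<zeta>y s + ry t s) \<and>
     pholder \<kappa> a b \<zeta>y \<and> pC2 (2 * \<kappa>) a b ry"

definition Mnorm :: "real \<Rightarrow> real \<Rightarrow> real \<Rightarrow> (real \<Rightarrow> real ^ 'k)
     \<Rightarrow> (real \<Rightarrow> real ^ 'k ^ 'n) \<Rightarrow> (real \<Rightarrow> real \<Rightarrow> real ^ 'k) \<Rightarrow> real" where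
  "Mnorm \<kappa> a b y \<zeta>y ry = pnorm0 a b \<zeta>y + pnorm1 \<kappa> a b \<zeta>y + pnorm2 (2 * \<kappa>) a b ry + pnorm1 \<kappa> a b y"

end

theory Submission
  imports Defs
begin

text \<open>Integrating the twisted decomposition of \<open>yt\<close> against \<open>\<phi>\<close> produces the controlled
  decomposition of \<open>y\<close>. Split
  \<open>yt t - yt s = (\<delta>yt) t s + (e\<^bsup>-\<xi>(t-s)\<^esup> - 1) (\<delta>yt) s a + (e\<^bsup>-\<xi>(t-s)\<^esup> - 1) e\<^bsup>-\<xi>(s-a)\<^esup> ht\<close>:
  the last term integrates to \<open>f t s\<close>, the first to \<open>x\<^sup>1 t s \<zeta> s\<close> plus the integral of \<open>rt t s\<close>,
  and the middle one is of order \<open>(t-s)\<^bsup>2\<kappa>\<^esup>\<close>, because \<open>\<bar>e\<^bsup>-\<xi>h\<^esup> - 1\<bar> \<le> h\<^bsup>2\<kappa>\<^esup>(1+\<xi>)\<close> is absorbed by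
  the weight \<open>1+\<xi>\<close> of \<open>\<L>\<^sub>1\<close> while \<open>(\<delta>yt) s a\<close> stays bounded. The Hoelder bounds on \<open>y\<close> and its
  remainder then follow by trading surplus exponents for powers of \<open>T\<close>.\<close>

lemma bounded_linear_vector_matrix_mult: "bounded_linear (\<lambda>x::real^'n. x v* (M::real^'k^'n))"
proof -
  have "(\<lambda>x::real^'n. x v* M) = (*v) (transpose M)" by (rule ext) simp
  then show ?thesis by simp
qed

lemma norm_vector_matrix_mult_le:
  fixes x :: "real^'n" and M :: "real^'k^'n"
  shows "norm (x v* M) \<le> real CARD('k) * real CARD('n) * norm M * norm x"
proof -
  have "norm (x v* M) \<le> onorm ((*v) (transpose M)) * norm x"
    using onorm[OF matrix_vector_mul_bounded_linear[of "transpose M"], of x] by simp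
  moreover have "onorm ((*v) (transpose M)) \<le> real CARD('k) * real CARD('n) * norm M"
  proof (rule onorm_le_matrix_component)
    fix i j
    have "\<bar>transpose M $ i $ j\<bar> = \<bar>M $ j $ i\<bar>" by (simp add: transpose_def)
    also have "\<dots> \<le> norm (M $ j)" by (rule component_le_norm_cart)
    also have "\<dots> \<le> norm M" by (rule Finite_Cartesian_Product.norm_nth_le)
    finally show "\<bar>transpose M $ i $ j\<bar> \<le> norm M" .
  qed
  ultimately show ?thesis
    by (metis (no_types, lifting) mult_right_mono norm_ge_zero order_trans)
qed

subsection \<open>The weighted space \<open>\<L>\<^sub>1\<close> and integration against \<open>\<phi>\<close>\<close>

lemma L1_weight_eq:
  "indicator {0<..} \<xi> * ennreal (\<bar>\<phi> \<xi>\<bar> * (1 + \<xi>) * norm (g \<xi>)) =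
   ennreal (\<bar>indicator {0<..} \<xi> *\<^sub>R \<phi> \<xi>\<bar> * (1 + \<xi>) * norm (indicator {0..} \<xi> *\<^sub>R g \<xi>))"
  for \<xi> :: real and g :: "real \<Rightarrow> 'v::real_normed_vector"
  by (cases "\<xi> > 0") (auto simp: indicator_def)

lemma L1_weight_measurable:
  fixes g :: "real \<Rightarrow> 'v::{banach,second_countable_topology}"
  assumes "set_borel_measurable lborel {0<..} \<phi>" and "set_borel_measurable lborel {0..} g"
  shows "(\<lambda>\<xi>. indicator {0<..} \<xi> * ennreal (\<bar>\<phi> \<xi>\<bar> * (1 + \<xi>) * norm (g \<xi>))) \<in> borel_measurable lborel"
proof -
  have [measurable]: "(\<lambda>x. indicator {0<..} x *\<^sub>R \<phi> x) \<in> borel_measurable lborel"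
    "(\<lambda>x. indicator {0..} x *\<^sub>R g x) \<in> borel_measurable lborel"
    using assms by (simp_all add: set_borel_measurable_def)
  show ?thesis unfolding L1_weight_eq by measurable
qed

lemma L1_nn_eq_L1norm: "isL1 \<phi> g \<Longrightarrow> L1_nn \<phi> g = ennreal (L1norm \<phi> g)"
  unfolding isL1_def L1norm_def by (simp add: ennreal_enn2real_if less_top)

lemma L1norm_nonneg: "0 \<le> L1norm \<phi> g"
  unfolding L1norm_def by simp

lemma L1norm_zero: "L1norm \<phi> (\<lambda>\<xi>. 0::'v::real_normed_vector) = 0"
  by (simp add: L1norm_def L1_nn_def)

lemma phint_multiplier:
  fixes g :: "real \<Rightarrow> 'v::{banach,second_countable_topology}"
  assumes phim: "set_borel_measurable lborel {0<..} \<phi>"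
    and gL: "isL1 \<phi> g"
    and cm: "c \<in> borel_measurable lborel"
    and cb: "\<And>\<xi>. \<xi> > 0 \<Longrightarrow> \<bar>c \<xi>\<bar> \<le> K * (1 + \<xi>)"
  shows phint_multiplier_integrable: "set_integrable lborel {0<..} (\<lambda>\<xi>. \<phi> \<xi> *\<^sub>R (c \<xi> *\<^sub>R g \<xi>))"
    and norm_phint_multiplier_le: "norm (phint \<phi> (\<lambda>\<xi>. c \<xi> *\<^sub>R g \<xi>)) \<le> K * L1norm \<phi> g"
proof -
  have K0: "0 \<le> K" using cb[of 1] by simp
  have [measurable]: "(\<lambda>x. indicator {0<..} x *\<^sub>R \<phi> x) \<in> borel_measurable lborel"
    "(\<lambda>x. indicator {0..} x *\<^sub>R g x) \<in> borel_measurable lborel" "c \<in> borel_measurable lborel"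
    using phim gL cm by (simp_all add: set_borel_measurable_def isL1_def)
  define F where "F = (\<lambda>\<xi>. indicator {0<..} \<xi> *\<^sub>R (\<phi> \<xi> *\<^sub>R (c \<xi> *\<^sub>R g \<xi>)))"
  have "F = (\<lambda>\<xi>. (indicator {0<..} \<xi> *\<^sub>R \<phi> \<xi>) *\<^sub>R (c \<xi> *\<^sub>R (indicator {0..} \<xi> *\<^sub>R g \<xi>)))"
    unfolding F_def by (rule ext) (auto simp: indicator_def)
  then have Fm: "F \<in> borel_measurable lborel" by (simp only:) measurable
  have "(\<integral>\<^sup>+\<xi>. ennreal (norm (F \<xi>)) \<partial>lborel) \<le>
        (\<integral>\<^sup>+\<xi>. ennreal K * (indicator {0<..} \<xi> * ennreal (\<bar>\<phi> \<xi>\<bar> * (1 + \<xi>) * norm (g \<xi>))) \<partial>lborel)"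
  proof (rule nn_integral_mono)
    fix \<xi> :: real
    show "ennreal (norm (F \<xi>)) \<le> ennreal K * (indicator {0<..} \<xi> * ennreal (\<bar>\<phi> \<xi>\<bar> * (1 + \<xi>) * norm (g \<xi>)))"
    proof (cases "\<xi> > 0")
      case True
      have "norm (F \<xi>) = \<bar>\<phi> \<xi>\<bar> * \<bar>c \<xi>\<bar> * norm (g \<xi>)" using True by (simp add: F_def abs_mult)
      also have "\<dots> \<le> \<bar>\<phi> \<xi>\<bar> * (K * (1 + \<xi>)) * norm (g \<xi>)"
        by (intro mult_right_mono mult_left_mono cb True) auto
      finally have "norm (F \<xi>) \<le> K * (\<bar>\<phi> \<xi>\<bar> * (1 + \<xi>) * norm (g \<xi>))" by (simp add: algebra_simps)
      then show ?thesis using True K0 by (simp add: ennreal_mult[symmetric])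
    qed (simp add: F_def)
  qed
  also have "\<dots> = ennreal K * L1_nn \<phi> g"
    unfolding L1_nn_def
    using L1_weight_measurable[OF phim, of g] gL by (intro nn_integral_cmult) (auto simp: isL1_def)
  also have "\<dots> = ennreal (K * L1norm \<phi> g)"
    using L1_nn_eq_L1norm[OF gL] K0 L1norm_nonneg[of \<phi> g] by (simp add: ennreal_mult)
  finally have nb: "(\<integral>\<^sup>+\<xi>. ennreal (norm (F \<xi>)) \<partial>lborel) \<le> ennreal (K * L1norm \<phi> g)" .
  then have Fi: "integrable lborel F"
    using le_less_trans[OF nb ennreal_less_top] by (intro integrableI_bounded[OF Fm]) simp
  then show "set_integrable lborel {0<..} (\<lambda>\<xi>. \<phi> \<xi> *\<^sub>R (c \<xi> *\<^sub>R g \<xi>))"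
    by (simp add: set_integrable_def F_def)
  have "phint \<phi> (\<lambda>\<xi>. c \<xi> *\<^sub>R g \<xi>) = integral\<^sup>L lborel F"
    by (simp add: phint_def set_lebesgue_integral_def F_def)
  then have "ennreal (norm (phint \<phi> (\<lambda>\<xi>. c \<xi> *\<^sub>R g \<xi>))) \<le> ennreal (K * L1norm \<phi> g)"
    using integral_norm_bound_ennreal[OF Fi] nb by (metis order_trans)
  then show "norm (phint \<phi> (\<lambda>\<xi>. c \<xi> *\<^sub>R g \<xi>)) \<le> K * L1norm \<phi> g"
    using K0 L1norm_nonneg[of \<phi> g] ennreal_le_iff[of "K * L1norm \<phi> g"] by simp
qed

lemma
  fixes g :: "real \<Rightarrow> 'v::{banach,second_countable_topology}"
  assumes "set_borel_measurable lborel {0<..} \<phi>" and "isL1 \<phi> g"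
  shows phint_integrable: "set_integrable lborel {0<..} (\<lambda>\<xi>. \<phi> \<xi> *\<^sub>R g \<xi>)"
    and norm_phint_le: "norm (phint \<phi> g) \<le> L1norm \<phi> g"
  using phint_multiplier[OF assms, of "\<lambda>_. 1" 1] by auto

lemma L1_dominated:
  fixes g :: "real \<Rightarrow> 'v::{banach,second_countable_topology}"
    and h1 :: "real \<Rightarrow> 'w::{banach,second_countable_topology}"
    and h2 :: "real \<Rightarrow> 'u::{banach,second_countable_topology}"
  assumes phim: "set_borel_measurable lborel {0<..} \<phi>"
    and h1: "isL1 \<phi> h1" and h2: "isL1 \<phi> h2"
    and gm: "set_borel_measurable lborel {0..} g"
    and K1: "0 \<le> K1" and K2: "0 \<le> K2"
    and dom: "\<And>\<xi>. \<xi> > 0 \<Longrightarrow> norm (g \<xi>) \<le> K1 * norm (h1 \<xi>) + K2 * norm (h2 \<xi>)"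
  shows isL1_dominated: "isL1 \<phi> g"
    and L1norm_dominated: "L1norm \<phi> g \<le> K1 * L1norm \<phi> h1 + K2 * L1norm \<phi> h2"
proof -
  define W1 where "W1 = (\<lambda>\<xi>. indicator {0<..} \<xi> * ennreal (\<bar>\<phi> \<xi>\<bar> * (1 + \<xi>) * norm (h1 \<xi>)))"
  define W2 where "W2 = (\<lambda>\<xi>. indicator {0<..} \<xi> * ennreal (\<bar>\<phi> \<xi>\<bar> * (1 + \<xi>) * norm (h2 \<xi>)))"
  have W1: "W1 \<in> borel_measurable lborel" and W2: "W2 \<in> borel_measurable lborel"
    using L1_weight_measurable[OF phim, of h1] L1_weight_measurable[OF phim, of h2] h1 h2
    unfolding isL1_def W1_def W2_def by blast+
  have "L1_nn \<phi> g \<le> (\<integral>\<^sup>+\<xi>. ennreal K1 * W1 \<xi> + ennreal K2 * W2 \<xi> \<partial>lborel)"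
    unfolding L1_nn_def
  proof (rule nn_integral_mono)
    fix \<xi> :: real
    show "indicator {0<..} \<xi> * ennreal (\<bar>\<phi> \<xi>\<bar> * (1 + \<xi>) * norm (g \<xi>)) \<le> ennreal K1 * W1 \<xi> + ennreal K2 * W2 \<xi>"
    proof (cases "\<xi> > 0")
      case True
      have "\<bar>\<phi> \<xi>\<bar> * (1 + \<xi>) * norm (g \<xi>) \<le> \<bar>\<phi> \<xi>\<bar> * (1 + \<xi>) * (K1 * norm (h1 \<xi>) + K2 * norm (h2 \<xi>))"
        using True by (intro mult_left_mono dom) auto
      also have "\<dots> = K1 * (\<bar>\<phi> \<xi>\<bar> * (1 + \<xi>) * norm (h1 \<xi>)) + K2 * (\<bar>\<phi> \<xi>\<bar> * (1 + \<xi>) * norm (h2 \<xi>))"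
        by (simp add: algebra_simps)
      finally show ?thesis using True K1 K2
        by (simp add: W1_def W2_def ennreal_mult[symmetric] ennreal_plus[symmetric] del: ennreal_plus)
    qed simp
  qed
  also have "\<dots> = ennreal K1 * L1_nn \<phi> h1 + ennreal K2 * L1_nn \<phi> h2"
    using W1 W2 by (simp add: nn_integral_add nn_integral_cmult W1_def W2_def L1_nn_def)
  also have "\<dots> = ennreal (K1 * L1norm \<phi> h1 + K2 * L1norm \<phi> h2)"
    using L1_nn_eq_L1norm[OF h1] L1_nn_eq_L1norm[OF h2] K1 K2 L1norm_nonneg[of \<phi> h1] L1norm_nonneg[of \<phi> h2]
    by (simp add: ennreal_mult[symmetric] ennreal_plus[symmetric] del: ennreal_plus)
  finally have bound: "L1_nn \<phi> g \<le> ennreal (K1 * L1norm \<phi> h1 + K2 * L1norm \<phi> h2)" .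
  then show "isL1 \<phi> g" using gm le_less_trans[OF bound ennreal_less_top] unfolding isL1_def by simp
  have "L1norm \<phi> g \<le> enn2real (ennreal (K1 * L1norm \<phi> h1 + K2 * L1norm \<phi> h2))"
    unfolding L1norm_def[of _ g] by (rule enn2real_mono[OF bound]) simp
  then show "L1norm \<phi> g \<le> K1 * L1norm \<phi> h1 + K2 * L1norm \<phi> h2"
    using K1 K2 L1norm_nonneg[of \<phi> h1] L1norm_nonneg[of \<phi> h2] by (simp del: ennreal_plus)
qed

abbreviation phint_integrable :: "(real \<Rightarrow> real) \<Rightarrow> (real \<Rightarrow> 'v::{banach,second_countable_topology}) \<Rightarrow> bool"
  where "phint_integrable \<phi> g \<equiv> set_integrable lborel {0<..} (\<lambda>\<xi>. \<phi> \<xi> *\<^sub>R g \<xi>)"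

lemma phint_diff:
  "phint_integrable \<phi> f \<Longrightarrow> phint_integrable \<phi> g \<Longrightarrow>
    phint_integrable \<phi> (\<lambda>\<xi>. f \<xi> - g \<xi>) \<and> phint \<phi> (\<lambda>\<xi>. f \<xi> - g \<xi>) = phint \<phi> f - phint \<phi> g"
  using set_integral_diff[of lborel "{0<..}" "\<lambda>\<xi>. \<phi> \<xi> *\<^sub>R f \<xi>" "\<lambda>\<xi>. \<phi> \<xi> *\<^sub>R g \<xi>"]
  by (simp add: phint_def scaleR_diff_right)

lemma phint_add:
  "phint_integrable \<phi> f \<Longrightarrow> phint_integrable \<phi> g \<Longrightarrow>
    phint \<phi> (\<lambda>\<xi>. f \<xi> + g \<xi>) = phint \<phi> f + phint \<phi> g"
  using set_integral_add[of lborel "{0<..}" "\<lambda>\<xi>. \<phi> \<xi> *\<^sub>R f \<xi>" "\<lambda>\<xi>. \<phi> \<xi> *\<^sub>R g \<xi>"]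
  by (simp add: phint_def scaleR_add_right)

lemma phint_vector_matrix_mult:
  fixes x :: "real \<Rightarrow> real^'n" and M :: "real^'k^'n"
  assumes "phint_integrable \<phi> x"
  shows "phint_integrable \<phi> (\<lambda>\<xi>. x \<xi> v* M) \<and> phint \<phi> (\<lambda>\<xi>. x \<xi> v* M) = phint \<phi> x v* M"
proof -
  have eq: "(\<lambda>\<xi>. indicator {0<..} \<xi> *\<^sub>R (\<phi> \<xi> *\<^sub>R (x \<xi> v* M))) = (\<lambda>\<xi>. (indicator {0<..} \<xi> *\<^sub>R (\<phi> \<xi> *\<^sub>R x \<xi>)) v* M)"
    by (rule ext) (simp add: scaleR_vector_matrix_assoc)
  have i: "integrable lborel (\<lambda>\<xi>. indicator {0<..} \<xi> *\<^sub>R (\<phi> \<xi> *\<^sub>R x \<xi>))"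
    using assms by (simp add: set_integrable_def)
  show ?thesis
    unfolding set_integrable_def phint_def set_lebesgue_integral_def eq
    using integrable_bounded_linear[OF bounded_linear_vector_matrix_mult i]
      integral_bounded_linear[OF bounded_linear_vector_matrix_mult i] by blast
qed

lemma phint_cong: "(\<And>\<xi>. \<xi> > 0 \<Longrightarrow> f \<xi> = g \<xi>) \<Longrightarrow> phint \<phi> f = phint \<phi> g"
  unfolding phint_def by (rule set_lebesgue_integral_cong) auto

lemma tdelta1_measurable:
  fixes g :: "real \<Rightarrow> real \<Rightarrow> 'v::{banach,second_countable_topology}"
  assumes "isL1 \<phi> (g t)" "isL1 \<phi> (g s)"
  shows "set_borel_measurable lborel {0..} (tdelta1 g t s)"
proof -
  have [measurable]: "(\<lambda>x. indicator {0..} x *\<^sub>R g t x) \<in> borel_measurable lborel"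
    "(\<lambda>x. indicator {0..} x *\<^sub>R g s x) \<in> borel_measurable lborel"
    using assms by (auto simp: isL1_def set_borel_measurable_def)
  have "(\<lambda>\<xi>. indicator {0..} \<xi> *\<^sub>R tdelta1 g t s \<xi>) =
        (\<lambda>\<xi>. indicator {0..} \<xi> *\<^sub>R g t \<xi> - exp (- \<xi> * (t - s)) *\<^sub>R (indicator {0..} \<xi> *\<^sub>R g s \<xi>))"
    by (rule ext) (simp add: tdelta1_def scaleR_diff_right)
  then show ?thesis unfolding set_borel_measurable_def by (simp only:) measurable
qed

text \<open>Splitting an increment at the base point \<open>a\<close>; the last term is the integrand of \<open>f t s\<close>.\<close>

lemma increment_eq_tdelta1:
  "g t \<xi> - g s \<xi> = tdelta1 g t s \<xi> + (exp (- \<xi> * (t - s)) - 1) *\<^sub>R tdelta1 g s a \<xi>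
     + ((exp (- \<xi> * (t - s)) - 1) * exp (- \<xi> * (s - a))) *\<^sub>R g a \<xi>"
  by (simp add: tdelta1_def algebra_simps)

subsection \<open>Elementary bounds on the exponential kernel\<close>

lemma abs_exp_neg_minus_one_le: "0 \<le> x \<Longrightarrow> \<bar>exp (- x) - 1\<bar> \<le> (x::real)"
  using exp_ge_add_one_self[of "-x"] by simp

lemma abs_exp_neg_minus_one_le_powr:
  assumes x: "0 \<le> x" and \<theta>: "0 < \<theta>" "\<theta> \<le> 1"
  shows "\<bar>exp (- x) - 1\<bar> \<le> (x::real) powr \<theta>"
proof (cases "x \<le> 1")
  case True
  have "x = x powr 1" using x by (cases "x = 0") auto
  also have "\<dots> \<le> x powr \<theta>" using True x \<theta> by (intro powr_mono') auto
  finally show ?thesis using abs_exp_neg_minus_one_le[OF x] by linarith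
next
  case False
  have "\<bar>exp (- x) - 1\<bar> \<le> 1" using x by simp
  also have "1 \<le> x powr \<theta>" using False \<theta> by (intro ge_one_powr_ge_zero) auto
  finally show ?thesis .
qed

lemma powr_le_one_plus:
  assumes "0 \<le> (\<xi>::real)" "0 < \<theta>" "\<theta> \<le> 1"
  shows "\<xi> powr \<theta> \<le> 1 + \<xi>"
proof (cases "\<xi> \<le> 1")
  case True
  then show ?thesis using assms powr_le1[of \<theta> \<xi>] by linarith
next
  case False
  then show ?thesis using assms powr_mono[of \<theta> 1 \<xi>] by simp
qed

lemma abs_exp_neg_mult_minus_one_le:
  assumes "0 \<le> (\<xi>::real)" "0 \<le> h" "0 < \<theta>" "\<theta> \<le> 1"
  shows "\<bar>exp (- \<xi> * h) - 1\<bar> \<le> h powr \<theta> * (1 + \<xi>)"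
proof -
  have "\<bar>exp (- (\<xi> * h)) - 1\<bar> \<le> (\<xi> * h) powr \<theta>"
    using abs_exp_neg_minus_one_le_powr[of "\<xi> * h" \<theta>] assms by simp
  also have "\<dots> = \<xi> powr \<theta> * h powr \<theta>" using assms by (simp add: powr_mult)
  also have "\<dots> \<le> (1 + \<xi>) * h powr \<theta>"
    using assms powr_le_one_plus[of \<xi> \<theta>] by (intro mult_right_mono) auto
  finally show ?thesis by (simp add: mult.commute)
qed

lemma abs_exp_kernel_le:
  assumes "0 < (\<xi>::real)" "a \<le> s" "s \<le> t"
  shows "\<bar>(exp (- \<xi> * (t - s)) - 1) * exp (- \<xi> * (s - a))\<bar> \<le> (t - s) * (1 + \<xi>)"
proof -
  have "\<bar>(exp (- \<xi> * (t - s)) - 1) * exp (- \<xi> * (s - a))\<bar>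
      = \<bar>exp (- (\<xi> * (t - s))) - 1\<bar> * exp (- (\<xi> * (s - a)))"
    by (simp add: abs_mult)
  also have "\<dots> \<le> (\<xi> * (t - s)) * 1"
    using abs_exp_neg_minus_one_le[of "\<xi> * (t - s)"] assms by (intro mult_mono) auto
  also have "\<dots> \<le> (t - s) * (1 + \<xi>)" using assms by (simp add: algebra_simps)
  finally show ?thesis .
qed

subsection \<open>Hoelder quotients and their suprema\<close>

lemma powr_le_powr_mult:
  assumes "0 < (d::real)" "d \<le> T" "\<mu> \<le> \<nu>"
  shows "d powr \<nu> \<le> T powr (\<nu> - \<mu>) * d powr \<mu>"
proof -
  have "d powr \<nu> = d powr (\<nu> - \<mu>) * d powr \<mu>" by (simp flip: powr_add)
  also have "\<dots> \<le> T powr (\<nu> - \<mu>) * d powr \<mu>"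
    using assms by (intro mult_right_mono powr_mono2) auto
  finally show ?thesis .
qed

lemma
  fixes z :: "real \<Rightarrow> 'v::real_normed_vector"
  assumes ab: "a < b"
    and bound: "\<And>s t. a \<le> s \<Longrightarrow> s < t \<Longrightarrow> t \<le> b \<Longrightarrow> norm (z t - z s) \<le> M * (t - s) powr \<mu>"
  shows pholder_if_bound: "pholder \<mu> a b z" and pnorm1_le_if_bound: "pnorm1 \<mu> a b z \<le> M"
proof -
  have quot: "pquot1 \<mu> z p \<le> M" if "p \<in> pairs_ne a b" for p
  proof -
    obtain t s where "p = (t, s)" by (cases p)
    with that have p: "p = (t, s)" "t \<in> {a..b}" "s \<in> {a..b}" "s \<noteq> t"
      by (auto simp: pairs_ne_def)
    then consider "s < t" | "t < s" by linarith
    then show ?thesis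
      by cases (use bound[of s t] bound[of t s] p in
          \<open>auto simp: pquot1_def norm_minus_commute divide_le_eq\<close>)
  qed
  then show "pholder \<mu> a b z" unfolding pholder_def by (intro bdd_aboveI2)
  have "(b, a) \<in> pairs_ne a b" using ab by (auto simp: pairs_ne_def)
  then show "pnorm1 \<mu> a b z \<le> M" unfolding pnorm1_def using quot by (intro cSUP_least) auto
qed

lemma
  fixes r :: "real \<Rightarrow> real \<Rightarrow> 'v::real_normed_vector"
  assumes ab: "a < b"
    and bound: "\<And>s t. a \<le> s \<Longrightarrow> s < t \<Longrightarrow> t \<le> b \<Longrightarrow> norm (r t s) \<le> M * (t - s) powr \<mu>"
  shows pC2_if_bound: "pC2 \<mu> a b r" and pnorm2_le_if_bound: "pnorm2 \<mu> a b r \<le> M"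
proof -
  have quot: "pquot2 \<mu> r p \<le> M" if "p \<in> offdiag2 a b" for p
    using that bound by (auto simp: offdiag2_def pquot2_def divide_le_eq)
  then show "pC2 \<mu> a b r" unfolding pC2_def by (intro bdd_aboveI2)
  have "offdiag2 a b \<noteq> {}" using ab by (auto simp: offdiag2_def)
  then show "pnorm2 \<mu> a b r \<le> M" unfolding pnorm2_def using quot by (intro cSUP_least) auto
qed

lemma bdd_above_tquot2_if_bound:
  fixes B :: "real \<Rightarrow> real \<Rightarrow> real \<Rightarrow> 'v::real_normed_vector"
  assumes "\<And>s t. a \<le> s \<Longrightarrow> s < t \<Longrightarrow> t \<le> b \<Longrightarrow> L1norm \<phi> (B t s) \<le> M * (t - s) powr \<mu>"
  shows "bdd_above (tquot2 \<phi> \<mu> B ` offdiag2 a b)"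
  using assms by (intro bdd_aboveI2[where M=M]) (auto simp: offdiag2_def tquot2_def divide_le_eq)

lemma
  fixes B :: "real \<Rightarrow> real \<Rightarrow> real \<Rightarrow> 'v::real_normed_vector"
  assumes bdd: "bdd_above (tquot2 \<phi> \<mu> B ` offdiag2 a b)" and st: "a \<le> s" "s < t" "t \<le> b"
  shows L1norm_le_tnorm2: "L1norm \<phi> (B t s) \<le> tnorm2 \<phi> \<mu> a b B * (t - s) powr \<mu>"
    and tnorm2_nonneg: "0 \<le> tnorm2 \<phi> \<mu> a b B"
proof -
  have "(t, s) \<in> offdiag2 a b" using st by (auto simp: offdiag2_def)
  then have le: "tquot2 \<phi> \<mu> B (t, s) \<le> tnorm2 \<phi> \<mu> a b B"
    unfolding tnorm2_def by (rule cSUP_upper[OF _ bdd])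
  then show "L1norm \<phi> (B t s) \<le> tnorm2 \<phi> \<mu> a b B * (t - s) powr \<mu>"
    using st by (simp add: tquot2_def divide_le_eq)
  show "0 \<le> tnorm2 \<phi> \<mu> a b B"
    using le L1norm_nonneg[of \<phi> "B t s"] by (simp add: tquot2_def order_trans[rotated])
qed

lemma
  fixes z :: "real \<Rightarrow> 'v::real_normed_vector"
  assumes hoelder: "pholder \<mu> a b z" and ab: "a < b" and \<mu>: "0 \<le> \<mu>"
  shows pnorm1_nonneg: "0 \<le> pnorm1 \<mu> a b z"
    and norm_le_pnorm0: "\<And>s. s \<in> {a..b} \<Longrightarrow> norm (z s) \<le> pnorm0 a b z"
    and pnorm0_nonneg: "0 \<le> pnorm0 a b z"
proof -
  obtain H where H: "\<And>p. p \<in> pairs_ne a b \<Longrightarrow> pquot1 \<mu> z p \<le> H"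
    using hoelder unfolding pholder_def bdd_above_def by auto
  have ba: "(b, a) \<in> pairs_ne a b" using ab by (auto simp: pairs_ne_def)
  have "pquot1 \<mu> z (b, a) \<le> pnorm1 \<mu> a b z"
    unfolding pnorm1_def using hoelder ba by (intro cSUP_upper) (auto simp: pholder_def)
  moreover have "0 \<le> pquot1 \<mu> z (b, a)" by (simp add: pquot1_def)
  ultimately show "0 \<le> pnorm1 \<mu> a b z" by linarith
  have H0: "0 \<le> H" using H[OF ba] \<open>0 \<le> pquot1 \<mu> z (b, a)\<close> by linarith
  have "norm (z s) \<le> norm (z a) + H * (b - a) powr \<mu>" if "s \<in> {a..b}" for s
  proof (cases "s = a")
    case False
    then have sa: "(s, a) \<in> pairs_ne a b" "a < s" using that by (auto simp: pairs_ne_def)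
    then have "norm (z s - z a) \<le> H * (s - a) powr \<mu>"
      using H[OF sa(1)] by (simp add: pquot1_def divide_le_eq)
    also have "\<dots> \<le> H * (b - a) powr \<mu>"
      using that sa H0 \<mu> by (intro mult_left_mono powr_mono2) auto
    finally show ?thesis using norm_triangle_ineq2[of "z s" "z a"] by linarith
  qed (use H0 in simp)
  then have bdd: "bdd_above ((\<lambda>s. norm (z s)) ` {a..b})" by (intro bdd_aboveI2)
  show "\<And>s. s \<in> {a..b} \<Longrightarrow> norm (z s) \<le> pnorm0 a b z"
    unfolding pnorm0_def using bdd by (intro cSUP_upper) auto
  then have "norm (z a) \<le> pnorm0 a b z" using ab by simp
  then show "0 \<le> pnorm0 a b z" using norm_ge_zero[of "z a"] by linarith
qed

subsection \<open>One interval: from the twisted path \<open>yt\<close> to the controlled path \<open>y\<close>\<close>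

locale twisted_controlled_path =
  fixes \<phi> :: "real \<Rightarrow> real" and \<kappa> \<gamma> T Cx a b :: real
    and x1t :: "real \<Rightarrow> real \<Rightarrow> real \<Rightarrow> real ^ 'n"
    and a0 :: "real ^ 'k" and ht :: "real \<Rightarrow> real ^ 'k" and yt :: "real \<Rightarrow> real \<Rightarrow> real ^ 'k"
    and \<zeta> :: "real \<Rightarrow> real ^ 'k ^ 'n" and rt :: "real \<Rightarrow> real \<Rightarrow> real \<Rightarrow> real ^ 'k"
  assumes phi_measurable: "set_borel_measurable lborel {0<..} \<phi>"
    and interval: "a < b" "b - a \<le> T"
    and exponents: "0 < \<kappa>" "\<kappa> \<le> \<gamma>" "\<gamma> \<le> 2 * \<kappa>" "2 * \<kappa> \<le> 1"
    and x1t_L1: "\<And>s t. a \<le> s \<Longrightarrow> s \<le> t \<Longrightarrow> t \<le> b \<Longrightarrow> isL1 \<phi> (x1t t s)"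
    and x1t_hoelder: "\<And>s t. a \<le> s \<Longrightarrow> s < t \<Longrightarrow> t \<le> b \<Longrightarrow> L1norm \<phi> (x1t t s) \<le> Cx * (t - s) powr \<gamma>"
    and Cx_nonneg: "0 \<le> Cx"
    and ht_L1: "isL1 \<phi> ht"
    and yt_tQ: "tQ \<phi> \<kappa> x1t a b ht yt \<zeta> rt"
begin

abbreviation "Nyt \<equiv> tnorm1 \<phi> \<kappa> a b yt"
abbreviation "Nrt \<equiv> tnorm2 \<phi> (2 * \<kappa>) a b rt"
abbreviation "N\<zeta>0 \<equiv> pnorm0 a b \<zeta>"
abbreviation "N\<zeta> \<equiv> pnorm1 \<kappa> a b \<zeta>"
abbreviation "Nht \<equiv> L1norm \<phi> ht"

lemma yt_L1: "a \<le> t \<Longrightarrow> t \<le> b \<Longrightarrow> isL1 \<phi> (yt t)"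
  using yt_tQ by (auto simp: tQ_def tC1_def L1_cont_def)

lemma yt_start: "0 \<le> \<xi> \<Longrightarrow> yt a \<xi> = ht \<xi>"
  using yt_tQ by (simp add: tQ_def)

lemma yt_decomposition:
  "a \<le> s \<Longrightarrow> s \<le> t \<Longrightarrow> t \<le> b \<Longrightarrow> 0 \<le> \<xi> \<Longrightarrow> tdelta1 yt t s \<xi> = x1t t s \<xi> v* \<zeta> s + rt t s \<xi>"
  using yt_tQ by (auto simp: tQ_def simplex2_def)

lemma rt_L1: "a \<le> s \<Longrightarrow> s \<le> t \<Longrightarrow> t \<le> b \<Longrightarrow> isL1 \<phi> (rt t s)"
  using yt_tQ by (auto simp: tQ_def tC2mu_def tC2_def L1_cont_def simplex2_def)

lemma rt_bdd: "bdd_above (tquot2 \<phi> (2 * \<kappa>) rt ` offdiag2 a b)"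
  using yt_tQ by (simp add: tQ_def tC2mu_def)

lemma Nrt_nonneg: "0 \<le> Nrt"
  using tnorm2_nonneg[OF rt_bdd, of a b] interval by simp

lemma zeta_hoelder: "pholder \<kappa> a b \<zeta>"
  using yt_tQ by (simp add: tQ_def)

lemma N\<zeta>_nonneg: "0 \<le> N\<zeta>" and N\<zeta>0_nonneg: "0 \<le> N\<zeta>0"
  and norm_zeta_le: "s \<in> {a..b} \<Longrightarrow> norm (\<zeta> s) \<le> N\<zeta>0"
  using pnorm1_nonneg[OF zeta_hoelder] pnorm0_nonneg[OF zeta_hoelder]
    norm_le_pnorm0[OF zeta_hoelder] interval exponents by auto

lemma Nht_nonneg: "0 \<le> Nht"
  by (rule L1norm_nonneg)

lemma tdelta1_yt_L1:
  assumes st: "a \<le> s" "s \<le> t" "t \<le> b"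
  shows "isL1 \<phi> (tdelta1 yt t s)"
    and "L1norm \<phi> (tdelta1 yt t s)
          \<le> real CARD('k) * real CARD('n) * norm (\<zeta> s) * L1norm \<phi> (x1t t s) + L1norm \<phi> (rt t s)"
proof -
  define K where "K = real CARD('k) * real CARD('n) * norm (\<zeta> s)"
  have "norm (tdelta1 yt t s \<xi>) \<le> K * norm (x1t t s \<xi>) + 1 * norm (rt t s \<xi>)" if "\<xi> > 0" for \<xi>
    using yt_decomposition[OF st, of \<xi>] that norm_triangle_ineq[of "x1t t s \<xi> v* \<zeta> s" "rt t s \<xi>"]
      norm_vector_matrix_mult_le[of "x1t t s \<xi>" "\<zeta> s"] by (simp add: K_def)
  moreover have "set_borel_measurable lborel {0..} (tdelta1 yt t s)"
    using st by (intro tdelta1_measurable[of \<phi>] yt_L1) auto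
  moreover have "0 \<le> K" by (simp add: K_def)
  ultimately show "isL1 \<phi> (tdelta1 yt t s)"
    and "L1norm \<phi> (tdelta1 yt t s) \<le> K * L1norm \<phi> (x1t t s) + L1norm \<phi> (rt t s)"
    using L1_dominated[OF phi_measurable x1t_L1[OF st] rt_L1[OF st], of "tdelta1 yt t s" K 1]
    by auto
qed

text \<open>\<open>tQ\<close> only asks for the twisted increments of \<open>yt\<close> to be continuous; their Hoelder bound, i.e. the
  finiteness of the supremum \<open>Nyt\<close>, comes from the decomposition.\<close>

lemma tdelta1_yt_hoelder:
  assumes st: "a \<le> s" "s < t" "t \<le> b"
  shows "L1norm \<phi> (tdelta1 yt t s)
          \<le> (real CARD('k) * real CARD('n) * N\<zeta>0 * Cx * T powr (\<gamma> - \<kappa>) + Nrt * T powr \<kappa>) * (t - s) powr \<kappa>"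
proof -
  define K where "K = real CARD('k) * real CARD('n)"
  have d: "0 < t - s" "t - s \<le> T" using st interval by auto
  have "K * norm (\<zeta> s) * L1norm \<phi> (x1t t s) \<le> K * N\<zeta>0 * (Cx * (t - s) powr \<gamma>)"
    using st norm_zeta_le[of s] N\<zeta>0_nonneg x1t_hoelder[OF st] L1norm_nonneg
    by (intro mult_mono mult_left_mono) (auto simp: K_def)
  also have "\<dots> \<le> K * N\<zeta>0 * (Cx * (T powr (\<gamma> - \<kappa>) * (t - s) powr \<kappa>))"
    using powr_le_powr_mult[OF d, of \<kappa> \<gamma>] exponents Cx_nonneg N\<zeta>0_nonneg
    by (intro mult_left_mono) (auto simp: K_def)
  finally have x1_part: "K * norm (\<zeta> s) * L1norm \<phi> (x1t t s)
      \<le> K * N\<zeta>0 * Cx * T powr (\<gamma> - \<kappa>) * (t - s) powr \<kappa>" by (simp add: mult.assoc)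
  have "L1norm \<phi> (rt t s) \<le> Nrt * (t - s) powr (2 * \<kappa>)"
    using L1norm_le_tnorm2[OF rt_bdd st] .
  also have "\<dots> \<le> Nrt * (T powr \<kappa> * (t - s) powr \<kappa>)"
    using powr_le_powr_mult[OF d, of \<kappa> "2 * \<kappa>"] exponents Nrt_nonneg
    by (intro mult_left_mono) auto
  finally have rt_part: "L1norm \<phi> (rt t s) \<le> Nrt * T powr \<kappa> * (t - s) powr \<kappa>"
    by (simp add: mult.assoc)
  have "(K * N\<zeta>0 * Cx * T powr (\<gamma> - \<kappa>) + Nrt * T powr \<kappa>) * (t - s) powr \<kappa>
      = K * N\<zeta>0 * Cx * T powr (\<gamma> - \<kappa>) * (t - s) powr \<kappa> + Nrt * T powr \<kappa> * (t - s) powr \<kappa>"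
    by (simp add: algebra_simps)
  then show ?thesis
    unfolding K_def[symmetric]
    using tdelta1_yt_L1(2)[of s t, folded K_def] st x1_part rt_part by linarith
qed

lemma tdelta1_yt_bdd: "bdd_above (tquot2 \<phi> \<kappa> (tdelta1 yt) ` offdiag2 a b)"
  by (rule bdd_above_tquot2_if_bound) (rule tdelta1_yt_hoelder)

lemma Nyt_nonneg: "0 \<le> Nyt"
  using tnorm2_nonneg[OF tdelta1_yt_bdd, of a b] interval by (simp add: tnorm1_def)

lemma tdelta1_yt_from_start:
  assumes s: "a \<le> s" "s \<le> b"
  shows "isL1 \<phi> (tdelta1 yt s a)" and "L1norm \<phi> (tdelta1 yt s a) \<le> Nyt * T powr \<kappa>"
proof -
  show "isL1 \<phi> (tdelta1 yt s a)" using tdelta1_yt_L1(1)[of a s] s by simp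
  show "L1norm \<phi> (tdelta1 yt s a) \<le> Nyt * T powr \<kappa>"
  proof (cases "s = a")
    case True
    then have "tdelta1 yt s a = (\<lambda>\<xi>. 0)" by (simp add: tdelta1_def)
    then show ?thesis using Nyt_nonneg by (simp add: L1norm_zero)
  next
    case False
    then have "L1norm \<phi> (tdelta1 yt s a) \<le> Nyt * (s - a) powr \<kappa>"
      using L1norm_le_tnorm2[OF tdelta1_yt_bdd, of a s] s by (simp add: tnorm1_def)
    also have "\<dots> \<le> Nyt * T powr \<kappa>"
      using Nyt_nonneg s interval exponents by (intro mult_left_mono powr_mono2) auto
    finally show ?thesis .
  qed
qed

definition y :: "real \<Rightarrow> real ^ 'k"
  where "y t = a0 + phint \<phi> (yt t)"

definition f :: "real \<Rightarrow> real \<Rightarrow> real ^ 'k"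
  where "f t s = phint \<phi> (\<lambda>\<xi>. ((exp (- \<xi> * (t - s)) - 1) * exp (- \<xi> * (s - a))) *\<^sub>R ht \<xi>)"

definition ry :: "real \<Rightarrow> real \<Rightarrow> real ^ 'k"
  where "ry t s = y t - y s - f t s - xint \<phi> x1t t s v* \<zeta> s"

lemma norm_f_le:
  assumes "a \<le> s" "s \<le> t"
  shows "norm (f t s) \<le> Nht * (t - s)"
proof -
  have "norm (f t s) \<le> (t - s) * Nht"
    unfolding f_def
    by (rule norm_phint_multiplier_le[OF phi_measurable ht_L1])
      (use abs_exp_kernel_le assms in auto)
  then show ?thesis by (simp add: mult.commute)
qed

lemma abs_exp_kernel_le_powr:
  "0 < \<xi> \<Longrightarrow> s \<le> t \<Longrightarrow> \<bar>exp (- \<xi> * (t - s)) - 1\<bar> \<le> (t - s) powr (2 * \<kappa>) * (1 + \<xi>)"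
  using abs_exp_neg_mult_minus_one_le[of \<xi> "t - s" "2 * \<kappa>"] exponents by auto

lemma ry_eq:
  assumes st: "a \<le> s" "s \<le> t" "t \<le> b"
  shows "ry t s = phint \<phi> (rt t s) + phint \<phi> (\<lambda>\<xi>. (exp (- \<xi> * (t - s)) - 1) *\<^sub>R tdelta1 yt s a \<xi>)"
proof -
  define F where "F = (\<lambda>\<xi>. ((exp (- \<xi> * (t - s)) - 1) * exp (- \<xi> * (s - a))) *\<^sub>R ht \<xi>)"
  define E where "E = (\<lambda>\<xi>. (exp (- \<xi> * (t - s)) - 1) *\<^sub>R tdelta1 yt s a \<xi>)"
  have int_yt: "phint_integrable \<phi> (yt t)" "phint_integrable \<phi> (yt s)"
    using st by (auto intro!: phint_integrable[OF phi_measurable] yt_L1)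
  have int_F: "phint_integrable \<phi> F"
    unfolding F_def
    by (rule phint_multiplier_integrable[OF phi_measurable ht_L1])
      (use abs_exp_kernel_le st in auto)
  have int_x1t: "phint_integrable \<phi> (x1t t s)" and int_rt: "phint_integrable \<phi> (rt t s)"
    using st by (auto intro!: phint_integrable[OF phi_measurable] x1t_L1 rt_L1)
  have int_E: "phint_integrable \<phi> E"
    unfolding E_def
    by (rule phint_multiplier_integrable[OF phi_measurable tdelta1_yt_from_start(1)])
      (use abs_exp_kernel_le_powr st in auto)
  have D1: "phint_integrable \<phi> (\<lambda>\<xi>. yt t \<xi> - yt s \<xi>)
      \<and> phint \<phi> (\<lambda>\<xi>. yt t \<xi> - yt s \<xi>) = phint \<phi> (yt t) - phint \<phi> (yt s)"
    by (rule phint_diff[OF int_yt])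
  note D2 = phint_diff[OF D1[THEN conjunct1] int_F]
  note X = phint_vector_matrix_mult[OF int_x1t, of "\<zeta> s"]
  note D3 = phint_diff[OF D2[THEN conjunct1] X[THEN conjunct1]]
  have "ry t s = phint \<phi> (yt t) - phint \<phi> (yt s) - phint \<phi> F - phint \<phi> (x1t t s) v* \<zeta> s"
    by (simp add: ry_def y_def f_def F_def xint_def)
  also have "\<dots> = phint \<phi> (\<lambda>\<xi>. yt t \<xi> - yt s \<xi> - F \<xi> - x1t t s \<xi> v* \<zeta> s)"
    using D1 D2 D3 X by simp
  also have "\<dots> = phint \<phi> (\<lambda>\<xi>. rt t s \<xi> + E \<xi>)"
  proof (rule phint_cong)
    fix \<xi> :: real assume "\<xi> > 0"
    then show "yt t \<xi> - yt s \<xi> - F \<xi> - x1t t s \<xi> v* \<zeta> s = rt t s \<xi> + E \<xi>"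
      using increment_eq_tdelta1[of yt t \<xi> s a] yt_decomposition[OF st, of \<xi>] yt_start[of \<xi>]
      by (simp add: F_def E_def)
  qed
  also have "\<dots> = phint \<phi> (rt t s) + phint \<phi> E"
    by (rule phint_add[OF int_rt int_E])
  finally show ?thesis by (simp add: E_def)
qed

lemma norm_ry_le:
  assumes st: "a \<le> s" "s < t" "t \<le> b"
  shows "norm (ry t s) \<le> (Nrt + Nyt * T powr \<kappa>) * (t - s) powr (2 * \<kappa>)"
proof -
  have "norm (phint \<phi> (\<lambda>\<xi>. (exp (- \<xi> * (t - s)) - 1) *\<^sub>R tdelta1 yt s a \<xi>))
      \<le> (t - s) powr (2 * \<kappa>) * L1norm \<phi> (tdelta1 yt s a)"
    by (rule norm_phint_multiplier_le[OF phi_measurable tdelta1_yt_from_start(1)])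
      (use abs_exp_kernel_le_powr st in auto)
  also have "\<dots> \<le> (t - s) powr (2 * \<kappa>) * (Nyt * T powr \<kappa>)"
    using tdelta1_yt_from_start(2)[of s] st by (intro mult_left_mono) auto
  finally have E_part: "norm (phint \<phi> (\<lambda>\<xi>. (exp (- \<xi> * (t - s)) - 1) *\<^sub>R tdelta1 yt s a \<xi>))
      \<le> (t - s) powr (2 * \<kappa>) * (Nyt * T powr \<kappa>)" .
  have "norm (phint \<phi> (rt t s)) \<le> Nrt * (t - s) powr (2 * \<kappa>)"
    using norm_phint_le[OF phi_measurable rt_L1] L1norm_le_tnorm2[OF rt_bdd st] st
    by (meson less_imp_le order_trans)
  then have "norm (ry t s) \<le> Nrt * (t - s) powr (2 * \<kappa>) + (t - s) powr (2 * \<kappa>) * (Nyt * T powr \<kappa>)"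
    using ry_eq[of s t] st E_part norm_triangle_ineq[of "phint \<phi> (rt t s)"]
    by (smt (verit, ccfv_threshold))
  then show ?thesis by (simp add: algebra_simps)
qed

lemma norm_y_increment_le:
  assumes st: "a \<le> s" "s < t" "t \<le> b"
  shows "norm (y t - y s) \<le> Nht * (t - s) + real CARD('k) * real CARD('n) * N\<zeta>0 * Cx * (t - s) powr \<gamma>
      + (Nrt + Nyt * T powr \<kappa>) * (t - s) powr (2 * \<kappa>)"
proof -
  define K where "K = real CARD('k) * real CARD('n)"
  have "norm (xint \<phi> x1t t s) \<le> Cx * (t - s) powr \<gamma>"
    using norm_phint_le[OF phi_measurable x1t_L1] x1t_hoelder[OF st] st
    by (simp add: xint_def) (meson less_imp_le order_trans)
  then have "K * norm (\<zeta> s) * norm (xint \<phi> x1t t s) \<le> K * N\<zeta>0 * (Cx * (t - s) powr \<gamma>)"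
    using norm_zeta_le[of s] st N\<zeta>0_nonneg by (intro mult_mono mult_left_mono) (auto simp: K_def)
  with norm_vector_matrix_mult_le[of "xint \<phi> x1t t s" "\<zeta> s", folded K_def]
  have x1_part: "norm (xint \<phi> x1t t s v* \<zeta> s) \<le> K * N\<zeta>0 * (Cx * (t - s) powr \<gamma>)"
    by (rule order_trans)
  have "norm (y t - y s) = norm ((f t s + xint \<phi> x1t t s v* \<zeta> s) + ry t s)"
    by (simp add: ry_def)
  also have "\<dots> \<le> norm (f t s + xint \<phi> x1t t s v* \<zeta> s) + norm (ry t s)"
    by (rule norm_triangle_ineq)
  also have "\<dots> \<le> norm (f t s) + norm (xint \<phi> x1t t s v* \<zeta> s) + norm (ry t s)"
    using norm_triangle_ineq by simp
  finally show ?thesis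
    unfolding K_def[symmetric] mult.assoc[of "K * N\<zeta>0" Cx]
    using norm_f_le[of s t] norm_ry_le[OF st] st x1_part by linarith
qed

lemma y_hoelder_gamma:
  assumes st: "a \<le> s" "s < t" "t \<le> b"
  shows "norm (y t - y s) \<le> (Nht * T powr (1 - \<gamma>) + real CARD('k) * real CARD('n) * N\<zeta>0 * Cx
      + (Nrt + Nyt * T powr \<kappa>) * T powr (2 * \<kappa> - \<gamma>)) * (t - s) powr \<gamma>"
proof -
  have d: "0 < t - s" "t - s \<le> T" using st interval by auto
  have "Nht * (t - s) \<le> Nht * (T powr (1 - \<gamma>) * (t - s) powr \<gamma>)"
    using powr_le_powr_mult[OF d, of \<gamma> 1] d exponents Nht_nonneg by (intro mult_left_mono) auto
  moreover have "(Nrt + Nyt * T powr \<kappa>) * (t - s) powr (2 * \<kappa>)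
      \<le> (Nrt + Nyt * T powr \<kappa>) * (T powr (2 * \<kappa> - \<gamma>) * (t - s) powr \<gamma>)"
    using powr_le_powr_mult[OF d, of \<gamma> "2 * \<kappa>"] exponents Nrt_nonneg Nyt_nonneg
    by (intro mult_left_mono) auto
  ultimately show ?thesis using norm_y_increment_le[OF st] by (simp add: algebra_simps)
qed

lemma y_hoelder_kappa:
  assumes st: "a \<le> s" "s < t" "t \<le> b"
  shows "norm (y t - y s) \<le> (Nht * (b - a) powr (1 - \<kappa>)
      + real CARD('k) * real CARD('n) * N\<zeta>0 * Cx * T powr (\<gamma> - \<kappa>)
      + (Nrt + Nyt * T powr \<kappa>) * T powr \<kappa>) * (t - s) powr \<kappa>"
proof -
  have d: "0 < t - s" "t - s \<le> T" and d': "t - s \<le> b - a" using st interval by auto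
  have "Nht * (t - s) \<le> Nht * ((b - a) powr (1 - \<kappa>) * (t - s) powr \<kappa>)"
    using powr_le_powr_mult[OF d(1) d', of \<kappa> 1] d exponents Nht_nonneg
    by (intro mult_left_mono) auto
  moreover have "real CARD('k) * real CARD('n) * N\<zeta>0 * Cx * (t - s) powr \<gamma>
      \<le> real CARD('k) * real CARD('n) * N\<zeta>0 * Cx * (T powr (\<gamma> - \<kappa>) * (t - s) powr \<kappa>)"
    using powr_le_powr_mult[OF d, of \<kappa> \<gamma>] exponents N\<zeta>0_nonneg Cx_nonneg
    by (intro mult_left_mono) auto
  moreover have "(Nrt + Nyt * T powr \<kappa>) * (t - s) powr (2 * \<kappa>)
      \<le> (Nrt + Nyt * T powr \<kappa>) * (T powr \<kappa> * (t - s) powr \<kappa>)"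
    using powr_le_powr_mult[OF d, of \<kappa> "2 * \<kappa>"] exponents Nrt_nonneg Nyt_nonneg
    by (intro mult_left_mono) auto
  ultimately show ?thesis using norm_y_increment_le[OF st] by (simp add: algebra_simps)
qed

lemma y_in_A: "inA \<kappa> \<gamma> (xint \<phi> x1t) a b f (a0 + phint \<phi> ht) y \<zeta> ry"
  unfolding inA_def
proof (intro conjI)
  show "pC2 1 a b f"
    by (rule pC2_if_bound[OF interval(1), where M = Nht]) (use norm_f_le in auto)
  show "pholder \<gamma> a b y" by (rule pholder_if_bound[OF interval(1) y_hoelder_gamma])
  show "y a = a0 + phint \<phi> ht" by (auto simp: y_def yt_start intro!: phint_cong)
  show "\<forall>(t, s)\<in>simplex2 a b. y t - y s - f t s = xint \<phi> x1t t s v* \<zeta> s + ry t s"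
    by (auto simp: ry_def)
  show "pholder \<kappa> a b \<zeta>" by (rule zeta_hoelder)
  show "pC2 (2 * \<kappa>) a b ry" by (rule pC2_if_bound[OF interval(1) norm_ry_le])
qed

lemma Mnorm_le:
  "Mnorm \<kappa> a b y \<zeta> ry \<le> (1 + real CARD('k) * real CARD('n) * Cx * T powr (\<gamma> - \<kappa>)
      + (1 + T powr \<kappa>) * (1 + T powr \<kappa>)) * (tQnorm \<phi> \<kappa> a b yt \<zeta> rt + (b - a) powr (1 - \<kappa>) * Nht)"
proof -
  define u where "u = T powr \<kappa>"
  define v where "v = real CARD('k) * real CARD('n) * Cx * T powr (\<gamma> - \<kappa>)"
  define w where "w = (b - a) powr (1 - \<kappa>) * Nht"
  define c where "c = 1 + v + (1 + u) * (1 + u)"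
  have uvw: "0 \<le> u" "0 \<le> v" "0 \<le> w"
    using Cx_nonneg Nht_nonneg by (auto simp: u_def v_def w_def)
  have "u * (1 + u) \<le> (1 + u) * (1 + u)" "1 * (1 + u) \<le> (1 + u) * (1 + u)"
    using uvw by (intro mult_right_mono; simp)+
  then have coeffs: "1 + v \<le> c" "1 \<le> c" "1 + u \<le> c" "u * (1 + u) \<le> c"
    unfolding c_def using uvw by (smt (verit))+
  have "Mnorm \<kappa> a b y \<zeta> ry \<le> (1 + v) * N\<zeta>0 + 1 * N\<zeta> + (1 + u) * Nrt + (u * (1 + u)) * Nyt + 1 * w"
    using pnorm2_le_if_bound[OF interval(1) norm_ry_le] pnorm1_le_if_bound[OF interval(1) y_hoelder_kappa]
    unfolding Mnorm_def by (simp add: u_def v_def w_def algebra_simps)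
  also have "\<dots> \<le> c * N\<zeta>0 + c * N\<zeta> + c * Nrt + c * Nyt + c * w"
    using coeffs uvw N\<zeta>0_nonneg N\<zeta>_nonneg Nrt_nonneg Nyt_nonneg
    by (intro add_mono mult_right_mono) simp_all
  also have "\<dots> = c * (tQnorm \<phi> \<kappa> a b yt \<zeta> rt + w)"
    by (simp add: tQnorm_def algebra_simps)
  finally show ?thesis by (simp add: c_def u_def v_def w_def)
qed

end

lemma tC2mu_bounds:
  fixes B :: "real \<Rightarrow> real \<Rightarrow> real \<Rightarrow> 'v::real_normed_vector"
  assumes "tC2mu \<phi> \<mu> a b B"
  obtains C where "0 \<le> C"
    and "\<And>s t. a \<le> s \<Longrightarrow> s \<le> t \<Longrightarrow> t \<le> b \<Longrightarrow> isL1 \<phi> (B t s)"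
    and "\<And>s t. a \<le> s \<Longrightarrow> s < t \<Longrightarrow> t \<le> b \<Longrightarrow> L1norm \<phi> (B t s) \<le> C * (t - s) powr \<mu>"
proof
  show "0 \<le> max 0 (tnorm2 \<phi> \<mu> a b B)" by simp
  show "isL1 \<phi> (B t s)" if "a \<le> s" "s \<le> t" "t \<le> b" for s t
    using assms that by (auto simp: tC2mu_def tC2_def L1_cont_def simplex2_def)
  show "L1norm \<phi> (B t s) \<le> max 0 (tnorm2 \<phi> \<mu> a b B) * (t - s) powr \<mu>"
    if "a \<le> s" "s < t" "t \<le> b" for s t
    using L1norm_le_tnorm2[of \<phi> \<mu> B a b s t] assms that
    by (simp add: tC2mu_def) (meson max.cobounded2 mult_right_mono order_trans powr_ge_zero)
qed

theorem proposition4p12: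
  fixes \<phi> :: "real \<Rightarrow> real" and T \<kappa> \<gamma> :: real
    and x1t :: "real \<Rightarrow> real \<Rightarrow> real \<Rightarrow> real ^ 'n"
    and x2t :: "real \<Rightarrow> real \<Rightarrow> real \<Rightarrow> real ^ 'n ^ 'n"
    and x3t :: "real \<Rightarrow> real \<Rightarrow> real \<Rightarrow> real \<Rightarrow> real ^ 'n ^ 'n"
  assumes "set_borel_measurable lborel {0<..} \<phi>"
    and "T > 0"
    and "1/3 < \<kappa>" and "\<kappa> < \<gamma>" and "\<gamma> < 1/2"
    and "hypH \<phi> \<gamma> T x1t x2t x3t"
  shows "\<exists>c. \<forall>a b (a0 :: real ^ 'k) (ht :: real \<Rightarrow> real ^ 'k)
              (yt :: real \<Rightarrow> real \<Rightarrow> real ^ 'k) (\<zeta> :: real \<Rightarrow> real ^ 'k ^ 'n)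
              (rt :: real \<Rightarrow> real \<Rightarrow> real \<Rightarrow> real ^ 'k).
     0 \<le> a \<and> a < b \<and> b \<le> T \<and> isL1 \<phi> ht \<and> tQ \<phi> \<kappa> x1t a b ht yt \<zeta> rt \<longrightarrow>
     (let y = (\<lambda>t. a0 + phint \<phi> (yt t));
          h = a0 + phint \<phi> ht;
          f = (\<lambda>t s. phint \<phi> (\<lambda>\<xi>. ((exp (- \<xi> * (t - s)) - 1) * exp (- \<xi> * (s - a))) *\<^sub>R ht \<xi>));
          x1 = xint \<phi> x1t;
          ry = (\<lambda>t s. y t - y s - f t s - x1 t s v* \<zeta> s)
      in inA \<kappa> \<gamma> x1 a b f h y \<zeta> ry \<and>
         Mnorm \<kappa> a b y \<zeta> ry \<le> c * (tQnorm \<phi> \<kappa> a b yt \<zeta> rt + (b - a) powr (1 - \<kappa>) * L1norm \<phi> ht))"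
proof -
  obtain Cx where Cx: "0 \<le> Cx"
    and x1t_L1: "\<And>s t. 0 \<le> s \<Longrightarrow> s \<le> t \<Longrightarrow> t \<le> T \<Longrightarrow> isL1 \<phi> (x1t t s)"
    and x1t_hoelder: "\<And>s t. 0 \<le> s \<Longrightarrow> s < t \<Longrightarrow> t \<le> T \<Longrightarrow> L1norm \<phi> (x1t t s) \<le> Cx * (t - s) powr \<gamma>"
    using tC2mu_bounds[of \<phi> \<gamma> 0 T x1t] assms(6) unfolding hypH_def by blast
  show ?thesis
    apply (rule exI[of _ "1 + real CARD('k) * real CARD('n) * Cx * T powr (\<gamma> - \<kappa>)
        + (1 + T powr \<kappa>) * (1 + T powr \<kappa>)"], intro allI impI)
    subgoal premises interval_hyps for a b a0 ht yt \<zeta> rt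
    proof -
      interpret twisted_controlled_path \<phi> \<kappa> \<gamma> T Cx a b x1t a0 ht yt \<zeta> rt
        using assms interval_hyps Cx x1t_L1 x1t_hoelder by unfold_locales auto
      show ?thesis
        using y_in_A Mnorm_le by (simp add: Let_def y_def[abs_def] f_def[abs_def] ry_def[abs_def])
    qed
    done
qed

end
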